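(* Let $\Phi:[0,\infty)\to[0,\infty)$ be a continuous, increasing, convex, differentiable function with $\Phi(0)=0$ and $\int^{+\infty}\frac{dt}{\Phi(t)}<+\infty$. Let $\Psi:(0,1]\to\mathbb{R}_+$ be a decreasing function such that $s\mapsto s\Psi(s)$ is increasing. Assume there is a constant $C>0$ such that \[ \Psi(s)\le C\,\Phi'(t)\qquad\text{where } s=\frac{1}{\Phi(t)\Phi'(t)}, \] for all sufficiently large $t$. Then there is a constant $C'$, depending only on $\Phi$, $\Psi$ and $C$, such that for every interval $I\subset\mathbb{R}$ and every weight $w\ge 0$ on $I$, with $N=N_I^w$, \[ \mathbf{n}_\Psi(N):=\int_0^\infty N(t)\Psi(N(t))\,dt\le C'\,\|w\|_{L^\Phi(I)}. \]
   Context: For an interval $I$ and a nonnegative function $w$ on $I$, the normalized distribution function is $N_I^w(t)=\frac{1}{|I|}\,|\{x\in I: w(x)>t\}|$, $t>0$; in the integrand the quantity $N(t)\Psi(N(t))$ is taken to be $0$ when $N(t)=0$. The Orlicz (Luxemburg) norm is $\|w\|_{L^\Phi(I)}=\inf\{\lambda>0:\frac{1}{|I|}\int_I\Phi(w/\lambda)\,dx\le 1\}$. *)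

theory Defs
  imports "HOL-Analysis.Analysis"
begin

definition norm_distr :: "real set \<Rightarrow> (real \<Rightarrow> real) \<Rightarrow> real \<Rightarrow> real" where
  "norm_distr I w t = measure lebesgue {x \<in> I. w x > t} / measure lebesgue I"

definition n_Psi :: "(real \<Rightarrow> real) \<Rightarrow> (real \<Rightarrow> real) \<Rightarrow> ennreal" where
  "n_Psi \<Psi> N = (\<integral>\<^sup>+ t\<in>{0<..}. ennreal (if N t = 0 then 0 else N t * \<Psi> (N t)) \<partial>lborel)"

text \<open>Luxemburg norm; the infimum of the empty set is \<top> (= +oo).\<close>
definition luxemburg_norm :: "(real \<Rightarrow> real) \<Rightarrow> real set \<Rightarrow> (real \<Rightarrow> real) \<Rightarrow> ennreal" where
  "luxemburg_norm \<Phi> I w = Inf {ennreal r | r. r > 0 \<and>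
      ennreal (1 / measure lebesgue I) * (\<integral>\<^sup>+ x\<in>I. ennreal (\<Phi> (w x / r)) \<partial>lebesgue) \<le> 1}"

end

theory Submission
  imports Defs
begin

text \<open>
  By homogeneity it suffices to treat weights whose normalised Orlicz integral
  \<open>|I|\<^sup>-\<^sup>1 \<integral>\<^sub>I \<Phi>(w)\<close> is at most 1, and to show that then \<open>\<^bold>n\<^sub>\<Psi>(N) \<le> C'\<close>.
  Since \<open>1/\<Phi>\<close> is integrable, \<open>\<Phi>\<close> grows at least linearly, and convexity gives
  \<open>\<Phi>(t) \<le> t \<Phi>'(t)\<close>; hence \<open>\<Phi> \<Phi>' \<ge> 1\<close> beyond some threshold \<open>T\<close>.
  For \<open>t \<le> T\<close> simply \<open>N \<Psi>(N) \<le> \<Psi>(1)\<close>. For \<open>t \<ge> T\<close> put \<open>s = 1/(\<Phi>(t) \<Phi>'(t))\<close>: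
  if \<open>N(t) \<le> s\<close> then \<open>N \<Psi>(N) \<le> s \<Psi>(s) \<le> C/\<Phi>(t)\<close>, which is integrable at infinity;
  otherwise \<open>N \<Psi>(N) \<le> \<Psi>(s) N \<le> C \<Phi>'(t) N(t)\<close>, and by Fubini (the layer cake
  formula) \<open>\<integral>\<^sub>T\<^sup>\<infinity> \<Phi>'(t) N(t) dt \<le> |I|\<^sup>-\<^sup>1 \<integral>\<^sub>I \<Phi>(w) \<le> 1\<close>.
  Applied to \<open>w/\<lambda>\<close> for every \<open>\<lambda>\<close> admissible in the Luxemburg norm, this gives
  \<open>\<^bold>n\<^sub>\<Psi>(N) \<le> C' \<lambda>\<close>.
\<close>

lemma convex_on_deriv_mono_on:
  fixes f f' :: "real \<Rightarrow> real"
  assumes convex: "convex_on A f" and connected: "connected A"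
    and deriv: "\<And>x. x \<in> interior A \<Longrightarrow> (f has_real_derivative f' x) (at x within A)"
  shows "mono_on (interior A) f'"
proof (rule mono_onI)
  fix x y assume x: "x \<in> interior A" and y: "y \<in> interior A" and "x \<le> y"
  show "f' x \<le> f' y"
  proof (cases "x = y")
    case False
    have "f' x * (y - x) \<le> f y - f x"
      using convex_on_imp_above_tangent[OF convex connected x _ deriv[OF x]] y interior_subset
      by blast
    also have "\<dots> \<le> f' y * (y - x)"
    proof -
      have "f' y * (x - y) \<le> f x - f y"
        using convex_on_imp_above_tangent[OF convex connected y _ deriv[OF y]] x interior_subset
        by blast
      then show ?thesis by (simp add: algebra_simps)
    qed
    finally show ?thesis
      using False \<open>x \<le> y\<close> by (simp add: mult_le_cancel_right)
  qed simp
qed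

lemma diff_le_integral_inverse_mult:
  fixes f :: "real \<Rightarrow> real"
  assumes mono: "mono_on {a..} f" and pos: "f a > 0"
    and int: "(\<lambda>t. 1 / f t) integrable_on {a..}" and t: "a \<le> t"
  shows "t - a \<le> integral {a..} (\<lambda>t. 1 / f t) * f t"
proof -
  have f_pos: "f u > 0" if "a \<le> u" for u
    using mono_onD[OF mono, of a u] that pos by auto
  have "(t - a) / f t = integral {a..t} (\<lambda>_. 1 / f t)"
    using t by simp
  also have "\<dots> \<le> integral {a..t} (\<lambda>u. 1 / f u)"
    using f_pos mono_onD[OF mono] integrable_on_subinterval[OF int]
    by (intro integral_le) (auto intro!: divide_left_mono)
  also have "\<dots> \<le> integral {a..} (\<lambda>u. 1 / f u)"
    using f_pos by (intro integral_subset_le int integrable_on_subinterval[OF int])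
      (auto intro: less_imp_le)
  finally show ?thesis
    using f_pos[OF t] by (simp add: divide_le_eq)
qed

lemma eventually_one_le_mult_deriv:
  fixes \<Phi> \<Phi>' :: "real \<Rightarrow> real"
  assumes convex: "convex_on {0..} \<Phi>"
    and deriv: "\<And>t. t \<ge> 0 \<Longrightarrow> (\<Phi> has_real_derivative \<Phi>' t) (at t within {0..})"
    and mono: "mono_on {0..} \<Phi>" and "\<Phi> 0 = 0"
    and a: "a \<ge> 0" "\<Phi> a > 0" and int: "(\<lambda>t. 1 / \<Phi> t) integrable_on {a..}"
  shows "\<forall>\<^sub>F t in at_top. 1 \<le> \<Phi> t * \<Phi>' t"
proof -
  define k where "k = integral {a..} (\<lambda>t. 1 / \<Phi> t) + 1"
  have Phi_pos: "\<Phi> t > 0" if "a \<le> t" for t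
    using mono_onD[OF mono, of a t] that a by auto
  have "integral {a..} (\<lambda>t. 1 / \<Phi> t) \<ge> 0"
    using Phi_pos by (intro integral_nonneg int) (auto intro: less_imp_le)
  then have k: "k \<ge> 1" by (simp add: k_def)
  have "1 \<le> \<Phi> t * \<Phi>' t" if t: "max (2 * a) (4 * (k * k)) \<le> t" for t
  proof -
    have "1 \<le> k * k" using mult_mono[OF k k] k by simp
    then have t_pos: "t > 0" using t by linarith
    have "t / 2 \<le> t - a" using t by simp
    also have "\<dots> \<le> integral {a..} (\<lambda>t. 1 / \<Phi> t) * \<Phi> t"
      using t t_pos a
      by (intro diff_le_integral_inverse_mult[OF mono_on_subset[OF mono] a(2) int]) auto
    also have "\<dots> \<le> k * \<Phi> t"
      using Phi_pos[of t] t a by (simp add: k_def distrib_right)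
    finally have Phi_ge: "t / (2 * k) \<le> \<Phi> t"
      using k by (simp add: divide_le_eq algebra_simps)
    have "\<Phi> 0 - \<Phi> t \<ge> \<Phi>' t * (0 - t)"
      using t_pos by (intro convex_on_imp_above_tangent[OF convex] deriv) auto
    then have "t * (1 / (2 * k)) \<le> t * \<Phi>' t"
      using Phi_ge \<open>\<Phi> 0 = 0\<close> by (simp add: algebra_simps)
    then have Phi'_ge: "1 / (2 * k) \<le> \<Phi>' t"
      using t_pos by (rule mult_left_le_imp_le)
    have "1 \<le> t / (4 * (k * k))"
      using t k by (simp add: le_divide_eq)
    also have "\<dots> = t / (2 * k) * (1 / (2 * k))"
      by simp
    also have "\<dots> \<le> \<Phi> t * \<Phi>' t"
      using Phi_ge Phi'_ge Phi_pos[of t] t a k by (intro mult_mono) auto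
    finally show ?thesis .
  qed
  then show ?thesis
    unfolding eventually_at_top_linorder by blast
qed

lemma mult_Psi_le:
  fixes \<Psi> :: "real \<Rightarrow> real"
  assumes Psi_decr: "\<And>s s'. s \<in> {0<..1} \<Longrightarrow> s' \<in> {0<..1} \<Longrightarrow> s \<le> s' \<Longrightarrow> \<Psi> s' \<le> \<Psi> s"
    and sPsi_incr: "mono_on {0<..1} (\<lambda>s. s * \<Psi> s)"
    and n: "n \<in> {0<..1}" and p: "0 < p" and pq: "1 \<le> p * q"
    and Psi_pq: "\<Psi> (1 / (p * q)) \<le> C * q" and C: "0 \<le> C"
  shows "n * \<Psi> n \<le> C / p + C * q * n"
proof -
  define s where "s = 1 / (p * q)"
  have q: "q > 0" using zero_less_mult_pos[of p q] p pq by linarith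
  have s: "s \<in> {0<..1}" using p q pq by (simp add: s_def)
  show ?thesis
  proof (cases "n \<le> s")
    case True
    have "n * \<Psi> n \<le> s * \<Psi> s" using mono_onD[OF sPsi_incr n s True] .
    also have "\<dots> \<le> s * (C * q)" using Psi_pq s by (intro mult_left_mono) (auto simp: s_def)
    also have "\<dots> = C / p" using p q by (simp add: s_def)
    moreover have "0 \<le> C * q * n" using C q n by simp
    ultimately show ?thesis by linarith
  next
    case False
    then have "\<Psi> n \<le> C * q" using Psi_decr[OF s n] Psi_pq by (simp add: s_def)
    then have "n * \<Psi> n \<le> C * q * n" using n by (simp add: mult.commute)
    moreover have "0 \<le> C / p" using C p by simp
    ultimately show ?thesis by linarith
  qed
qed

lemma le_mult_Inf_ennreal:
  fixes c X :: ennreal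
  assumes "c \<noteq> 0" "c \<noteq> top" and le: "\<And>s. s \<in> S \<Longrightarrow> X \<le> c * s"
  shows "X \<le> c * Inf S"
proof -
  have "X / c \<le> Inf S"
    using assms by (intro Inf_greatest divide_le_posI_ennreal) (auto simp: zero_less_iff_neq_zero)
  then have "c * (X / c) \<le> c * Inf S" by (rule mult_left_mono) simp
  then show ?thesis
    using assms by (simp add: ennreal_times_divide mult.commute[of c] ennreal_mult_divide_eq)
qed

lemma borel_measurable_antimono:
  fixes f :: "real \<Rightarrow> real"
  assumes "antimono f"
  shows "f \<in> borel_measurable borel"
proof -
  have "mono (\<lambda>x. - f x)" using assms by (auto simp: mono_def antimono_def)
  then show ?thesis using borel_measurable_mono borel_measurable_uminus_eq by blast
qed

lemma borel_measurable_indicator_mono_on: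
  fixes f :: "real \<Rightarrow> real"
  assumes "A \<in> sets borel" and "mono_on A f"
  shows "(\<lambda>u. indicator A u * f u) \<in> borel_measurable borel"
  using borel_measurable_mono_on_fnc[OF assms(2)] borel_measurable_restrict_space_iff[of A borel f]
    assms(1)
  by simp

lemma nn_integral_deriv_le:
  fixes f f' :: "real \<Rightarrow> real"
  assumes deriv: "\<And>u. T \<le> u \<Longrightarrow> (f has_real_derivative f' u) (at u within {T..})"
    and f'_nonneg: "\<And>u. T \<le> u \<Longrightarrow> 0 \<le> f' u" and "0 \<le> f T"
  shows "(\<integral>\<^sup>+u. ennreal (indicator {T..} u * f' u) * indicator {..<y} u \<partial>lborel) \<le> ennreal (f y)"
proof (cases "T \<le> y")
  case True
  have "(\<integral>\<^sup>+u. ennreal (indicator {T..} u * f' u) * indicator {..<y} u \<partial>lborel)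
      \<le> (\<integral>\<^sup>+u. ennreal (indicator {T..y} u * f' u) \<partial>lborel)"
    by (intro nn_integral_mono) (auto simp: indicator_def)
  also have "\<dots> = ennreal (f y - f T)"
  proof (rule nn_integral_has_integral_lebesgue)
    show "(f' has_integral f y - f T) {T..y}"
    proof (rule fundamental_theorem_of_calculus[OF True])
      fix u assume "u \<in> {T..y}"
      then have "(f has_real_derivative f' u) (at u within {T..y})"
        by (intro DERIV_subset[OF deriv]) auto
      then show "(f has_vector_derivative f' u) (at u within {T..y})"
        by (simp add: has_real_derivative_iff_has_vector_derivative)
    qed
  qed (use f'_nonneg in auto)
  also have "\<dots> \<le> ennreal (f y)"
    using \<open>0 \<le> f T\<close> by (intro ennreal_leI) simp
  finally show ?thesis .
next
  case False
  then have "(\<lambda>u. ennreal (indicator {T..} u * f' u) * indicator {..<y} u) = (\<lambda>_. 0)"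
    by (auto simp: indicator_def)
  then show ?thesis by simp
qed

lemma nn_integral_deriv_measure_superlevel_le:
  fixes f f' :: "real \<Rightarrow> real" and v :: "'a \<Rightarrow> real"
  assumes "finite_measure M" and v[measurable]: "v \<in> borel_measurable M"
    and deriv: "\<And>u. T \<le> u \<Longrightarrow> (f has_real_derivative f' u) (at u within {T..})"
    and f'_nonneg: "\<And>u. T \<le> u \<Longrightarrow> 0 \<le> f' u" and f'_mono: "mono_on {T..} f'"
    and "0 \<le> f T"
  shows "(\<integral>\<^sup>+u. ennreal (indicator {T..} u * f' u * measure M {x \<in> space M. u < v x}) \<partial>lborel)
           \<le> (\<integral>\<^sup>+x. ennreal (f (v x)) \<partial>M)"
proof -
  interpret finite_measure M by fact
  interpret pair_sigma_finite lborel M by unfold_locales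
  have [measurable]: "(\<lambda>u. indicator {T..} u * f' u) \<in> borel_measurable borel"
    using borel_measurable_indicator_mono_on[OF _ f'_mono] by simp
  define F where
    "F u x = ennreal (indicator {T..} u * f' u) * indicator {y \<in> space M. u < v y} x" for u x
  have F_meas: "case_prod F \<in> borel_measurable (lborel \<Otimes>\<^sub>M M)"
    unfolding F_def by measurable
  have "ennreal (indicator {T..} u * f' u * measure M {x \<in> space M. u < v x})
      = (\<integral>\<^sup>+x. F u x \<partial>M)" for u
  proof -
    have "(\<integral>\<^sup>+x. F u x \<partial>M)
        = ennreal (indicator {T..} u * f' u) * emeasure M {x \<in> space M. u < v x}"
      unfolding F_def by (rule nn_integral_cmult_indicator) measurable
    then show ?thesis
      using f'_nonneg[of u] by (simp add: emeasure_eq_measure ennreal_mult indicator_def)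
  qed
  then have "(\<integral>\<^sup>+u. ennreal (indicator {T..} u * f' u * measure M {x \<in> space M. u < v x}) \<partial>lborel)
      = (\<integral>\<^sup>+u. (\<integral>\<^sup>+x. F u x \<partial>M) \<partial>lborel)" by simp
  also have "\<dots> = (\<integral>\<^sup>+x. (\<integral>\<^sup>+u. F u x \<partial>lborel) \<partial>M)"
    by (rule Fubini'[symmetric, OF F_meas])
  also have "\<dots> \<le> (\<integral>\<^sup>+x. ennreal (f (v x)) \<partial>M)"
  proof (rule nn_integral_mono)
    fix x assume "x \<in> space M"
    then have "F u x = ennreal (indicator {T..} u * f' u) * indicator {..<v x} u" for u
      by (simp add: F_def indicator_def)
    then show "(\<integral>\<^sup>+u. F u x \<partial>lborel) \<le> ennreal (f (v x))"
      using nn_integral_deriv_le[OF deriv f'_nonneg \<open>0 \<le> f T\<close>] by simp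
  qed
  finally show ?thesis .
qed

lemma superlevel_set_lmeasurable:
  fixes w :: "real \<Rightarrow> real"
  assumes I: "I \<in> lmeasurable" and w: "w \<in> borel_measurable (lebesgue_on I)"
  shows "{x \<in> I. t < w x} \<in> lmeasurable"
proof -
  have "{x \<in> space (lebesgue_on I). t < w x} \<in> sets (lebesgue_on I)"
    using w by measurable
  then have "{x \<in> I. t < w x} \<in> sets lebesgue"
    using I by (simp add: sets_restrict_space_iff)
  then show ?thesis
    using I by (intro fmeasurableI2[OF I]) auto
qed

lemma antimono_measure_superlevel_set:
  fixes w :: "real \<Rightarrow> real"
  assumes "I \<in> lmeasurable" "w \<in> borel_measurable (lebesgue_on I)"
  shows "antimono (\<lambda>t. measure lebesgue {x \<in> I. t < w x})"
  using superlevel_set_lmeasurable[OF assms]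
  by (intro antimonoI measure_mono_fmeasurable) auto

lemma norm_distr_antimono:
  assumes "I \<in> lmeasurable" "w \<in> borel_measurable (lebesgue_on I)"
  shows "antimono (norm_distr I w)"
proof (rule antimonoI)
  fix s t :: real assume "s \<le> t"
  then show "norm_distr I w t \<le> norm_distr I w s"
    using antimonoD[OF antimono_measure_superlevel_set[OF assms]] unfolding norm_distr_def
    by (intro divide_right_mono) auto
qed

lemma norm_distr_in_unit_interval:
  assumes I: "I \<in> lmeasurable" and w: "w \<in> borel_measurable (lebesgue_on I)"
  shows "norm_distr I w t \<in> {0..1}"
proof -
  have "measure lebesgue {x \<in> I. t < w x} \<le> measure lebesgue I"
    using superlevel_set_lmeasurable[OF assms] I by (intro measure_mono_fmeasurable) auto
  then show ?thesis
    by (auto simp: norm_distr_def divide_le_eq_1 less_le)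
qed

lemma norm_distr_rescale:
  assumes "r > 0"
  shows "norm_distr I w (r * u) = norm_distr I (\<lambda>x. w x / r) u"
  using assms by (simp add: norm_distr_def less_divide_eq mult.commute)

lemma nn_integral_deriv_norm_distr_le:
  fixes f f' v :: "real \<Rightarrow> real"
  assumes I: "I \<in> lmeasurable" and v: "v \<in> borel_measurable (lebesgue_on I)"
    and deriv: "\<And>u. T \<le> u \<Longrightarrow> (f has_real_derivative f' u) (at u within {T..})"
    and f'_nonneg: "\<And>u. T \<le> u \<Longrightarrow> 0 \<le> f' u" and f'_mono: "mono_on {T..} f'"
    and "0 \<le> f T"
    and normalized: "ennreal (1 / measure lebesgue I) * (\<integral>\<^sup>+x\<in>I. ennreal (f (v x)) \<partial>lebesgue) \<le> 1"
  shows "(\<integral>\<^sup>+u. ennreal (indicator {T..} u * f' u * norm_distr I v u) \<partial>lborel) \<le> 1"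
proof -
  define \<mu> where "\<mu> u = measure lebesgue {x \<in> I. u < v x}" for u
  have [measurable]: "\<mu> \<in> borel_measurable borel"
    unfolding \<mu>_def using antimono_measure_superlevel_set[OF I v] by (rule borel_measurable_antimono)
  have [measurable]: "(\<lambda>u. indicator {T..} u * f' u) \<in> borel_measurable borel"
    using borel_measurable_indicator_mono_on[OF _ f'_mono] by simp
  have "(\<integral>\<^sup>+u. ennreal (indicator {T..} u * f' u * norm_distr I v u) \<partial>lborel)
      = (\<integral>\<^sup>+u. ennreal (1 / measure lebesgue I) * ennreal (indicator {T..} u * f' u * \<mu> u) \<partial>lborel)"
    using f'_nonneg
    by (intro nn_integral_cong) (auto simp: norm_distr_def \<mu>_def indicator_def ennreal_mult[symmetric])
  also have "\<dots> = ennreal (1 / measure lebesgue I)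
      * (\<integral>\<^sup>+u. ennreal (indicator {T..} u * f' u * \<mu> u) \<partial>lborel)"
    by (rule nn_integral_cmult) measurable
  also have "\<dots> \<le> ennreal (1 / measure lebesgue I) * (\<integral>\<^sup>+x\<in>I. ennreal (f (v x)) \<partial>lebesgue)"
  proof (rule mult_left_mono)
    have "(\<integral>\<^sup>+u. ennreal (indicator {T..} u * f' u * \<mu> u) \<partial>lborel)
        \<le> (\<integral>\<^sup>+x. ennreal (f (v x)) \<partial>lebesgue_on I)"
      using nn_integral_deriv_measure_superlevel_le[OF finite_measure_lebesgue_on[OF I] v
          deriv f'_nonneg f'_mono \<open>0 \<le> f T\<close>] I
      by (simp add: \<mu>_def measure_restrict_space)
    then show "(\<integral>\<^sup>+u. ennreal (indicator {T..} u * f' u * \<mu> u) \<partial>lborel)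
        \<le> (\<integral>\<^sup>+x\<in>I. ennreal (f (v x)) \<partial>lebesgue)"
      using I by (simp add: nn_integral_restrict_space)
  qed simp
  also have "\<dots> \<le> 1"
    by (rule normalized)
  finally show ?thesis .
qed

lemma borel_measurable_n_Psi_integrand:
  fixes N \<Psi> :: "real \<Rightarrow> real"
  assumes N: "antimono N" "\<And>t. N t \<in> {0..1}"
    and Psi_nonneg: "\<And>s. s \<in> {0<..1} \<Longrightarrow> \<Psi> s \<ge> 0"
    and sPsi_incr: "mono_on {0<..1} (\<lambda>s. s * \<Psi> s)"
  shows "(\<lambda>t. ennreal (if N t = 0 then 0 else N t * \<Psi> (N t))) \<in> borel_measurable borel"
proof -
  define g where "g n = (if n = 0 then 0 else n * \<Psi> n)" for n :: real
  have g_mono: "g n \<le> g n'" if "n \<in> {0..1}" "n' \<in> {0..1}" "n \<le> n'" for n n'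
  proof (cases "n = 0")
    case True
    then show ?thesis using that Psi_nonneg[of n'] by (simp add: g_def)
  next
    case False
    then show ?thesis using that mono_onD[OF sPsi_incr, of n n'] by (simp add: g_def)
  qed
  have "antimono (\<lambda>t. g (N t))"
    using N g_mono by (auto simp: antimono_def)
  then have [measurable]: "(\<lambda>t. g (N t)) \<in> borel_measurable borel"
    by (rule borel_measurable_antimono)
  show ?thesis
    unfolding g_def[symmetric] by measurable
qed

lemma n_Psi_rescale:
  fixes N \<Psi> :: "real \<Rightarrow> real"
  assumes r: "r > 0"
    and meas: "(\<lambda>t. ennreal (if N t = 0 then 0 else N t * \<Psi> (N t))) \<in> borel_measurable borel"
  shows "n_Psi \<Psi> N = ennreal r * n_Psi \<Psi> (\<lambda>u. N (r * u))"
proof -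
  let ?h = "\<lambda>t. ennreal (if N t = 0 then 0 else N t * \<Psi> (N t)) * indicator {0<..} t"
  have "?h \<in> borel_measurable borel"
    using meas by measurable
  from nn_integral_real_affine[OF this, of r 0] r
  have "(\<integral>\<^sup>+t. ?h t \<partial>lborel) = ennreal r * (\<integral>\<^sup>+u. ?h (r * u) \<partial>lborel)"
    by (simp only: add_0_left) simp
  moreover have "indicator {0<..} (r * u) = (indicator {0<..} u :: ennreal)" for u
    using r by (simp add: indicator_def zero_less_mult_iff)
  ultimately show ?thesis
    unfolding n_Psi_def by simp
qed

context
  fixes \<Phi> \<Phi>' \<Psi> :: "real \<Rightarrow> real" and C T :: real
  assumes convex: "convex_on {0..} \<Phi>"
    and deriv: "\<And>t. t \<ge> 0 \<Longrightarrow> (\<Phi> has_real_derivative \<Phi>' t) (at t within {0..})"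
    and Psi_nonneg: "\<And>s. s \<in> {0<..1} \<Longrightarrow> \<Psi> s \<ge> 0"
    and Psi_decr: "\<And>s s'. s \<in> {0<..1} \<Longrightarrow> s' \<in> {0<..1} \<Longrightarrow> s \<le> s' \<Longrightarrow> \<Psi> s' \<le> \<Psi> s"
    and sPsi_incr: "mono_on {0<..1} (\<lambda>s. s * \<Psi> s)"
    and C_nonneg: "0 \<le> C" and T_pos: "0 < T"
    and threshold: "\<And>u. T \<le> u \<Longrightarrow>
      0 < \<Phi> u \<and> 1 \<le> \<Phi> u * \<Phi>' u \<and> \<Psi> (1 / (\<Phi> u * \<Phi>' u)) \<le> C * \<Phi>' u"
    and inverse_integrable: "(\<lambda>t. 1 / \<Phi> t) integrable_on {T..}"
begin

lemma Phi_pos_beyond_threshold: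
  assumes "T \<le> u"
  shows "0 < \<Phi> u" and "0 < \<Phi>' u"
  using threshold[OF assms] zero_less_mult_pos[of "\<Phi> u" "\<Phi>' u"] by auto

lemma n_Psi_integrand_le:
  assumes u: "0 < u" and n: "n \<in> {0..1}"
  shows "(if n = 0 then 0 else n * \<Psi> n)
           \<le> \<Psi> 1 * indicator {0..T} u + C * indicator {T..} u * (1 / \<Phi> u + \<Phi>' u * n)"
proof -
  have first: "0 \<le> \<Psi> 1 * indicator {0..T} u"
    using Psi_nonneg[of 1] by simp
  have second: "0 \<le> C * indicator {T..} u * (1 / \<Phi> u + \<Phi>' u * n)"
    using Phi_pos_beyond_threshold[of u] C_nonneg n by (auto simp: indicator_def)
  show ?thesis
  proof (cases "n = 0")
    case True
    with first second show ?thesis by simp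
  next
    case False
    then have n: "n \<in> {0<..1}" using n by auto
    show ?thesis
    proof (cases "T \<le> u")
      case True
      with threshold have "n * \<Psi> n \<le> C / \<Phi> u + C * \<Phi>' u * n"
        by (intro mult_Psi_le[OF Psi_decr sPsi_incr n _ _ _ C_nonneg]) auto
      then show ?thesis
        using True False first by (simp add: distrib_left)
    next
      case False
      have "n * \<Psi> n \<le> 1 * \<Psi> 1"
        using mono_onD[OF sPsi_incr n, of 1] n by simp
      then show ?thesis
        using False u \<open>n \<noteq> 0\<close> by simp
    qed
  qed
qed

lemma mono_on_Phi'_beyond_threshold: "mono_on {T..} \<Phi>'"
  using convex_on_deriv_mono_on[OF convex connected_Ici deriv] T_pos
  by (auto elim!: mono_on_subset)

lemma borel_measurable_indicator_inverse_Phi: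
  "(\<lambda>u. indicator {T..} u * (1 / \<Phi> u)) \<in> borel_measurable borel"
proof -
  have "continuous_on {T..} (\<lambda>u. 1 / \<Phi> u)"
    using T_pos by (intro continuous_on_divide continuous_on_const
        DERIV_continuous_on[of _ _ \<Phi>'] DERIV_subset[OF deriv])
      (auto dest: Phi_pos_beyond_threshold(1))
  then show ?thesis
    using borel_measurable_continuous_on_indicator[of "{T..}"] by fastforce
qed

lemma n_Psi_norm_distr_integrand_le:
  fixes N :: "real \<Rightarrow> real"
  assumes I: "I \<in> lmeasurable" and v: "v \<in> borel_measurable (lebesgue_on I)"
    and N_def: "N = norm_distr I v"
  shows "ennreal (if N u = 0 then 0 else N u * \<Psi> (N u)) * indicator {0<..} u
           \<le> ennreal (\<Psi> 1 * indicator {0..T} u) + ennreal C * ennreal (indicator {T..} u * (1 / \<Phi> u))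
             + ennreal C * ennreal (indicator {T..} u * \<Phi>' u * N u)"
proof (cases "0 < u")
  case True
  have "(if N u = 0 then 0 else N u * \<Psi> (N u))
      \<le> \<Psi> 1 * indicator {0..T} u + C * indicator {T..} u * (1 / \<Phi> u + \<Phi>' u * N u)"
    unfolding N_def by (rule n_Psi_integrand_le[OF True norm_distr_in_unit_interval[OF I v]])
  also have "\<dots> = \<Psi> 1 * indicator {0..T} u + C * (indicator {T..} u * (1 / \<Phi> u))
      + C * (indicator {T..} u * \<Phi>' u * N u)"
    by (simp add: algebra_simps)
  finally have "ennreal (if N u = 0 then 0 else N u * \<Psi> (N u))
      \<le> ennreal (\<Psi> 1 * indicator {0..T} u + C * (indicator {T..} u * (1 / \<Phi> u))
        + C * (indicator {T..} u * \<Phi>' u * N u))"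
    by (rule ennreal_leI)
  moreover have nonneg: "0 \<le> \<Psi> 1 * indicator {0..T} u" "0 \<le> indicator {T..} u * (1 / \<Phi> u)"
    "0 \<le> indicator {T..} u * \<Phi>' u * N u"
    using Psi_nonneg[of 1] Phi_pos_beyond_threshold[of u] norm_distr_in_unit_interval[OF I v, of u]
    by (auto simp: N_def indicator_def)
  ultimately show ?thesis
    using True C_nonneg
    by (simp only: ennreal_plus ennreal_mult add_nonneg_nonneg mult_nonneg_nonneg nonneg
        indicator_simps greaterThan_iff mult_1_right)
qed simp

lemma n_Psi_norm_distr_le:
  assumes I: "I \<in> lmeasurable" and v: "v \<in> borel_measurable (lebesgue_on I)"
    and normalized:
      "ennreal (1 / measure lebesgue I) * (\<integral>\<^sup>+x\<in>I. ennreal (\<Phi> (v x)) \<partial>lebesgue) \<le> 1"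
  shows "n_Psi \<Psi> (norm_distr I v) \<le> ennreal (\<Psi> 1 * T + C * integral {T..} (\<lambda>t. 1 / \<Phi> t) + C)"
proof -
  define N where "N = norm_distr I v"
  define K where "K = integral {T..} (\<lambda>t. 1 / \<Phi> t)"
  define e1 where "e1 u = ennreal (\<Psi> 1 * indicator {0..T} u)" for u
  define e2 where "e2 u = ennreal (indicator {T..} u * (1 / \<Phi> u))" for u
  define e3 where "e3 u = ennreal (indicator {T..} u * \<Phi>' u * N u)" for u
  note Phi_pos = Phi_pos_beyond_threshold
  have [measurable]: "N \<in> borel_measurable borel"
    unfolding N_def using norm_distr_antimono[OF I v] by (rule borel_measurable_antimono)
  have [measurable]: "(\<lambda>u. indicator {T..} u * \<Phi>' u) \<in> borel_measurable borel"
    using borel_measurable_indicator_mono_on[OF _ mono_on_Phi'_beyond_threshold] by simp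
  have [measurable]: "e1 \<in> borel_measurable borel" "e2 \<in> borel_measurable borel"
    "e3 \<in> borel_measurable borel"
    unfolding e1_def e2_def e3_def using borel_measurable_indicator_inverse_Phi by measurable
  have int_e1: "(\<integral>\<^sup>+u. e1 u \<partial>lborel) = ennreal (\<Psi> 1 * T)"
    using T_pos Psi_nonneg[of 1]
    by (simp add: e1_def ennreal_mult ennreal_indicator nn_integral_cmult_indicator)
  have int_e2: "(\<integral>\<^sup>+u. e2 u \<partial>lborel) = ennreal K"
    unfolding e2_def K_def
    by (intro nn_integral_has_integral_lebesgue integrable_integral inverse_integrable)
      (auto dest: Phi_pos(1))
  have int_e3: "(\<integral>\<^sup>+u. e3 u \<partial>lborel) \<le> 1"
    unfolding e3_def N_def using T_pos Phi_pos mono_on_Phi'_beyond_threshold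
    by (intro nn_integral_deriv_norm_distr_le[OF I v DERIV_subset[OF deriv] _ _ _ normalized])
      (auto intro: less_imp_le)
  have K: "0 \<le> K"
    unfolding K_def by (intro integral_nonneg inverse_integrable) (auto dest: Phi_pos(1))
  have "n_Psi \<Psi> N \<le> (\<integral>\<^sup>+u. e1 u + ennreal C * e2 u + ennreal C * e3 u \<partial>lborel)"
    unfolding n_Psi_def e1_def e2_def e3_def
    by (intro nn_integral_mono n_Psi_norm_distr_integrand_le[OF I v N_def])
  also have "\<dots> = (\<integral>\<^sup>+u. e1 u \<partial>lborel) + ennreal C * (\<integral>\<^sup>+u. e2 u \<partial>lborel)
      + ennreal C * (\<integral>\<^sup>+u. e3 u \<partial>lborel)"
    by (simp add: nn_integral_add nn_integral_cmult)
  also have "\<dots> \<le> ennreal (\<Psi> 1 * T) + ennreal C * ennreal K + ennreal C * 1"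
    unfolding int_e1 int_e2 using int_e3 by (intro add_left_mono mult_left_mono) auto
  also have "\<dots> = ennreal (\<Psi> 1 * T + C * K + C)"
    using Psi_nonneg[of 1] T_pos C_nonneg K by (simp add: ennreal_plus ennreal_mult)
  finally show ?thesis
    unfolding N_def K_def .
qed

lemma n_Psi_norm_distr_le_scaled:
  assumes I: "I \<in> lmeasurable" and w: "w \<in> borel_measurable (lebesgue_on I)" and r: "r > 0"
    and normalized:
      "ennreal (1 / measure lebesgue I) * (\<integral>\<^sup>+x\<in>I. ennreal (\<Phi> (w x / r)) \<partial>lebesgue) \<le> 1"
  shows "n_Psi \<Psi> (norm_distr I w)
           \<le> ennreal r * ennreal (\<Psi> 1 * T + C * integral {T..} (\<lambda>t. 1 / \<Phi> t) + C)"
proof -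
  have w_r: "(\<lambda>x. w x / r) \<in> borel_measurable (lebesgue_on I)"
    using w by measurable
  have "n_Psi \<Psi> (norm_distr I w) = ennreal r * n_Psi \<Psi> (norm_distr I (\<lambda>x. w x / r))"
    using norm_distr_antimono[OF I w] norm_distr_in_unit_interval[OF I w]
    by (subst n_Psi_rescale[OF r borel_measurable_n_Psi_integrand[OF _ _ Psi_nonneg sPsi_incr]])
      (auto simp: norm_distr_rescale[OF r])
  also have "\<dots> \<le> ennreal r * ennreal (\<Psi> 1 * T + C * integral {T..} (\<lambda>t. 1 / \<Phi> t) + C)"
    using n_Psi_norm_distr_le[OF I w_r normalized] by (rule mult_left_mono) simp
  finally show ?thesis .
qed

end

lemma exists_threshold:
  fixes \<Phi> \<Phi>' \<Psi> :: "real \<Rightarrow> real" and C :: real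
  assumes convex: "convex_on {0..} \<Phi>"
    and deriv: "\<And>t. t \<ge> 0 \<Longrightarrow> (\<Phi> has_real_derivative \<Phi>' t) (at t within {0..})"
    and mono: "mono_on {0..} \<Phi>" and "\<Phi> 0 = 0"
    and a: "a \<ge> 0" "\<Phi> a > 0" and int: "(\<lambda>t. 1 / \<Phi> t) integrable_on {a..}"
    and PsiPhi: "\<forall>\<^sub>F t in at_top. \<Psi> (1 / (\<Phi> t * \<Phi>' t)) \<le> C * \<Phi>' t"
  obtains T where "0 < T"
    and "\<And>u. T \<le> u \<Longrightarrow> 0 < \<Phi> u \<and> 1 \<le> \<Phi> u * \<Phi>' u \<and> \<Psi> (1 / (\<Phi> u * \<Phi>' u)) \<le> C * \<Phi>' u"
    and "(\<lambda>t. 1 / \<Phi> t) integrable_on {T..}"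
proof -
  have Phi_pos: "0 < \<Phi> u" if "a \<le> u" for u
    using mono_onD[OF mono, of a u] a that by auto
  have "\<forall>\<^sub>F t in at_top. (1 \<le> \<Phi> t * \<Phi>' t \<and> \<Psi> (1 / (\<Phi> t * \<Phi>' t)) \<le> C * \<Phi>' t) \<and> max a 1 \<le> t"
    using eventually_one_le_mult_deriv[OF convex deriv mono \<open>\<Phi> 0 = 0\<close> a int] PsiPhi
    by (intro eventually_conj eventually_ge_at_top)
  then obtain T where
    T: "\<And>u. T \<le> u \<Longrightarrow> (1 \<le> \<Phi> u * \<Phi>' u \<and> \<Psi> (1 / (\<Phi> u * \<Phi>' u)) \<le> C * \<Phi>' u) \<and> max a 1 \<le> u"
    unfolding eventually_at_top_linorder by blast
  have "(\<lambda>t. 1 / \<Phi> t) absolutely_integrable_on {a..}"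
    using int by (rule nonnegative_absolutely_integrable_1) (auto dest: Phi_pos)
  then have "(\<lambda>t. 1 / \<Phi> t) absolutely_integrable_on {T..}"
    by (rule set_integrable_subset) (use T[of T] in auto)
  then have "(\<lambda>t. 1 / \<Phi> t) integrable_on {T..}"
    using set_lebesgue_integral_eq_integral(1) by blast
  moreover have "0 < T" using T[of T] by simp
  ultimately show ?thesis
    using T Phi_pos by (intro that) auto
qed

theorem lemma2p1:
  fixes \<Phi> \<Phi>' \<Psi> :: "real \<Rightarrow> real" and C :: real
  assumes Phi_cont: "continuous_on {0..} \<Phi>"
    and Phi_mono: "mono_on {0..} \<Phi>"
    and Phi_convex: "convex_on {0..} \<Phi>"
    and Phi_deriv: "\<And>t. t \<ge> 0 \<Longrightarrow> (\<Phi> has_real_derivative \<Phi>' t) (at t within {0..})"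
    and Phi_nonneg: "\<And>t. t \<ge> 0 \<Longrightarrow> \<Phi> t \<ge> 0"
    and Phi_0: "\<Phi> 0 = 0"
    and Phi_int: "\<exists>a. a \<ge> 0 \<and> \<Phi> a > 0 \<and> (\<lambda>t. 1 / \<Phi> t) integrable_on {a..}"
    and Psi_nonneg: "\<And>s. s \<in> {0<..1} \<Longrightarrow> \<Psi> s \<ge> 0"
    and Psi_decr: "\<And>s s'. s \<in> {0<..1} \<Longrightarrow> s' \<in> {0<..1} \<Longrightarrow> s \<le> s' \<Longrightarrow> \<Psi> s' \<le> \<Psi> s"
    and sPsi_incr: "mono_on {0<..1} (\<lambda>s. s * \<Psi> s)"
    and C_pos: "C > 0"
    and PsiPhi: "\<forall>\<^sub>F t in at_top. \<Psi> (1 / (\<Phi> t * \<Phi>' t)) \<le> C * \<Phi>' t"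
  shows "\<exists>C'::real. \<forall>(I::real set) (w::real \<Rightarrow> real).
           is_interval I \<and> bounded I \<and> measure lebesgue I > 0 \<and>
           w \<in> borel_measurable (lebesgue_on I) \<and> (\<forall>x\<in>I. w x \<ge> 0) \<longrightarrow>
           n_Psi \<Psi> (norm_distr I w) \<le> ennreal C' * luxemburg_norm \<Phi> I w"
proof -
  obtain a where a: "a \<ge> 0" "\<Phi> a > 0" "(\<lambda>t. 1 / \<Phi> t) integrable_on {a..}"
    using Phi_int by blast
  obtain T where T: "0 < T"
    and threshold: "\<And>u. T \<le> u \<Longrightarrow>
      0 < \<Phi> u \<and> 1 \<le> \<Phi> u * \<Phi>' u \<and> \<Psi> (1 / (\<Phi> u * \<Phi>' u)) \<le> C * \<Phi>' u"
    and int: "(\<lambda>t. 1 / \<Phi> t) integrable_on {T..}"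
    using exists_threshold[OF Phi_convex Phi_deriv Phi_mono Phi_0 a PsiPhi] by blast
  define C' where "C' = \<Psi> 1 * T + C * integral {T..} (\<lambda>t. 1 / \<Phi> t) + C"
  have "0 \<le> integral {T..} (\<lambda>t. 1 / \<Phi> t)"
    using threshold by (intro integral_nonneg int) (fastforce intro: less_imp_le)
  then have C': "C' > 0"
    unfolding C'_def using Psi_nonneg[of 1] T C_pos by (simp add: add_nonneg_pos)
  show ?thesis
  proof (intro exI[of _ C'] allI impI)
    fix I :: "real set" and w :: "real \<Rightarrow> real"
    assume "is_interval I \<and> bounded I \<and> measure lebesgue I > 0 \<and>
      w \<in> borel_measurable (lebesgue_on I) \<and> (\<forall>x\<in>I. w x \<ge> 0)"
    then have I: "I \<in> lmeasurable" and w: "w \<in> borel_measurable (lebesgue_on I)"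
      using bounded_set_imp_lmeasurable measure_notin_sets by fastforce+
    show "n_Psi \<Psi> (norm_distr I w) \<le> ennreal C' * luxemburg_norm \<Phi> I w"
      unfolding luxemburg_norm_def
    proof (rule le_mult_Inf_ennreal)
      fix s assume "s \<in> {ennreal r | r. r > 0 \<and>
        ennreal (1 / measure lebesgue I) * (\<integral>\<^sup>+ x\<in>I. ennreal (\<Phi> (w x / r)) \<partial>lebesgue) \<le> 1}"
      then show "n_Psi \<Psi> (norm_distr I w) \<le> ennreal C' * s"
        using n_Psi_norm_distr_le_scaled[OF Phi_convex Phi_deriv Psi_nonneg Psi_decr sPsi_incr
            less_imp_le[OF C_pos] T threshold int I w]
        by (auto simp: C'_def mult.commute)
    qed (use C' in auto)
  qed
qed

end
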